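(* Let $2/5 < r < 1$, put $p = \left\lceil \frac{5r-2}{1-r} \right\rceil$ and $\alpha = p - \frac{5r-2}{1-r}$, and let $\alpha = (0.\alpha_1 \alpha_2 \cdots)_2$ be the binary expansion of $\alpha$ with infinitely many zero digits. Define binary words $w^{\langle 0 \rangle} = \emptyset$ and $w^{\langle i \rangle} = w^{\langle i-1 \rangle} w^{\langle i-1 \rangle}\, 01011\, 0^{p - \alpha_i}$ for $i \geq 1$; each $w^{\langle i \rangle}$ is a proper prefix of $w^{\langle i+1 \rangle}$, and let $w$ be the infinite binary word which is the limit of this sequence. Then $\lim_{n \to \infty} |Z(w^{(n)})|/n = r$.
   Context: For a binary word $x$, $x^j$ denotes $j$ concatenated copies of $x$ ($x^0$ is empty), and juxtaposition denotes concatenation. $w^{(n)}$ denotes the initial subword of length $n$ of $w$, and $Z(u)$ is the set of indices $i$ with $u_i = 0$. *)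

theory Defs
  imports Complex_Main
begin

definition pval :: "real \<Rightarrow> nat" where
  "pval r = nat \<lceil>(5*r - 2) / (1 - r)\<rceil>"

definition alphaval :: "real \<Rightarrow> real" where
  "alphaval r = real (pval r) - (5*r - 2) / (1 - r)"

text \<open>i-th binary digit (i \<ge> 1) of x \<in> [0,1): the expansion with infinitely many zeros.\<close>
definition bdigit :: "real \<Rightarrow> nat \<Rightarrow> nat" where
  "bdigit x i = nat (\<lfloor>2 ^ i * x\<rfloor> mod 2)"

fun wblock :: "real \<Rightarrow> nat \<Rightarrow> nat list" where
  "wblock r 0 = []"
| "wblock r (Suc i) = wblock r i @ wblock r i @ [0,1,0,1,1]
      @ replicate (pval r - bdigit (alphaval r) (Suc i)) 0"

definition zcount :: "(nat \<Rightarrow> nat) \<Rightarrow> nat \<Rightarrow> nat" where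
  "zcount w n = card {i. i < n \<and> w i = 0}"

end

theory Submission
  imports Defs "HOL-Library.Discrete_Functions" "HOL-Real_Asymp.Real_Asymp"
begin

text \<open>
  Write \<open>w\<^sub>i\<close> for \<open>w\<^sup>\<langle>\<^sup>i\<^sup>\<rangle>\<close> and call \<open>|Z(u)| - r |u|\<close> the discrepancy of a word \<open>u\<close>;
  it is additive under concatenation. The choice of \<open>p\<close> means \<open>(1 - r) p = (1 - r) \<alpha> + 5r - 2\<close>,
  so the block \<open>01011 0^(p - \<alpha>\<^sub>i)\<close> has discrepancy \<open>(1 - r) (\<alpha> - \<alpha>\<^sub>i)\<close>. Together with
  \<open>frac (2 x) = 2 frac x - \<alpha>\<^sub>i\<^sub>+\<^sub>1\<close> for \<open>x = 2\<^sup>i \<alpha>\<close>, induction shows that \<open>w\<^sub>i\<close> has discrepancy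
  exactly \<open>(1 - r) (frac (2\<^sup>i \<alpha>) - \<alpha>)\<close>, which lies in \<open>[-1, 1]\<close>. A prefix of
  \<open>w\<^sub>i\<^sub>+\<^sub>1 = w\<^sub>i w\<^sub>i B\<close> is a prefix of \<open>w\<^sub>i\<close>, or a full copy of \<open>w\<^sub>i\<close> followed by a prefix
  of \<open>w\<^sub>i B\<close>, so the largest prefix discrepancy grows by at most 1 per level. As
  \<open>|w\<^sub>i| \<ge> 2\<^sup>i - 1\<close>, the discrepancy of \<open>w\<^sup>(\<^sup>n\<^sup>)\<close> is \<open>O(log n)\<close>.
\<close>

definition discrepancy :: "real \<Rightarrow> nat list \<Rightarrow> real" where
  "discrepancy r xs = real (count_list xs 0) - r * real (length xs)"

definition prefix_discrepancy_le :: "real \<Rightarrow> real \<Rightarrow> nat list \<Rightarrow> bool" where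
  "prefix_discrepancy_le r c xs \<longleftrightarrow> (\<forall>n \<le> length xs. \<bar>discrepancy r (take n xs)\<bar> \<le> c)"

lemma discrepancy_Nil [simp]: "discrepancy r [] = 0"
  by (simp add: discrepancy_def)

lemma discrepancy_append [simp]:
  "discrepancy r (xs @ ys) = discrepancy r xs + discrepancy r ys"
  by (simp add: discrepancy_def algebra_simps)

lemma count_list_replicate_same [simp]: "count_list (replicate n x) x = n"
  by (induction n) auto

lemma abs_discrepancy_le_length:
  assumes "0 \<le> r" "r \<le> 1"
  shows "\<bar>discrepancy r xs\<bar> \<le> real (length xs)"
proof -
  have "real (count_list xs 0) \<le> real (length xs)"
    using count_le_length by (metis of_nat_le_iff)
  moreover have "r * real (length xs) \<le> real (length xs)"
    using assms by (simp add: mult_left_le_one_le)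
  moreover have "0 \<le> r * real (length xs)"
    using assms by simp
  ultimately show ?thesis
    unfolding discrepancy_def by linarith
qed

lemma prefix_discrepancy_le_length:
  assumes "0 \<le> r" "r \<le> 1"
  shows "prefix_discrepancy_le r (real (length xs)) xs"
  unfolding prefix_discrepancy_le_def
  using abs_discrepancy_le_length[OF assms] by (smt (verit) length_take min.absorb2 of_nat_mono)

lemma prefix_discrepancy_le_append:
  assumes "prefix_discrepancy_le r a xs" and "\<bar>discrepancy r xs\<bar> \<le> b"
    and "prefix_discrepancy_le r c ys" and "a \<le> d" and "b + c \<le> d"
  shows "prefix_discrepancy_le r d (xs @ ys)"
  unfolding prefix_discrepancy_le_def
proof (intro allI impI)
  fix n assume n: "n \<le> length (xs @ ys)"
  show "\<bar>discrepancy r (take n (xs @ ys))\<bar> \<le> d"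
  proof (cases "n \<le> length xs")
    case True
    then have "\<bar>discrepancy r (take n xs)\<bar> \<le> a"
      using assms(1) unfolding prefix_discrepancy_le_def by blast
    then show ?thesis
      using True assms(4) by simp
  next
    case False
    then have "take n (xs @ ys) = xs @ take (n - length xs) ys"
      by simp
    moreover have "\<bar>discrepancy r (take (n - length xs) ys)\<bar> \<le> c"
      using assms(3) n unfolding prefix_discrepancy_le_def by simp
    ultimately show ?thesis
      using assms(2,5) abs_triangle_ineq[of "discrepancy r xs"] by simp
  qed
qed

lemma prefix_discrepancy_le_zcount:
  assumes "prefix_discrepancy_le r c xs" and "n \<le> length xs"
    and "\<And>k. k < length xs \<Longrightarrow> w k = xs ! k"
  shows "\<bar>real (zcount w n) - r * real n\<bar> \<le> c"
proof -
  have "count_list (take n xs) 0 = card {k. k < length (take n xs) \<and> 0 = take n xs ! k}"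
    by (simp add: count_list_eq_length_filter length_filter_conv_card)
  also have "{k. k < length (take n xs) \<and> 0 = take n xs ! k} = {k. k < n \<and> w k = 0}"
    using assms(2,3) by auto
  finally have "zcount w n = count_list (take n xs) 0"
    unfolding zcount_def ..
  then show ?thesis
    using assms(1,2) unfolding prefix_discrepancy_le_def discrepancy_def by simp
qed

lemma frac_two_power_Suc:
  "frac (2 ^ Suc i * x) = 2 * frac (2 ^ i * x) - real (bdigit x (Suc i))"
proof -
  define y where "y = 2 ^ i * x"
  have "\<lfloor>2 * y\<rfloor> = 2 * \<lfloor>y\<rfloor> \<or> \<lfloor>2 * y\<rfloor> = 2 * \<lfloor>y\<rfloor> + 1"
    by linarith
  then have "\<lfloor>2 * y\<rfloor> = 2 * \<lfloor>y\<rfloor> + \<lfloor>2 * y\<rfloor> mod 2"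
    by auto
  moreover have "\<lfloor>2 * y\<rfloor> mod 2 = int (bdigit x (Suc i))"
    unfolding bdigit_def y_def by (simp add: mult.assoc)
  ultimately show ?thesis
    unfolding frac_def y_def by (simp add: mult.assoc)
qed

lemma bdigit_le_1: "bdigit x i \<le> 1"
  unfolding bdigit_def by (simp add: nat_le_iff)

context
  fixes r :: real
  assumes r_gt: "2/5 < r" and r_lt: "r < 1"
begin

lemma real_pval: "real (pval r) = of_int \<lceil>(5*r - 2) / (1 - r)\<rceil>"
  and pval_ge_1: "1 \<le> pval r"
proof -
  have "0 < (5*r - 2) / (1 - r)"
    using r_gt r_lt by (simp add: field_simps)
  then show "real (pval r) = of_int \<lceil>(5*r - 2) / (1 - r)\<rceil>" "1 \<le> pval r"
    unfolding pval_def by (simp_all add: le_nat_iff)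
qed

lemma alphaval_nonneg: "0 \<le> alphaval r"
  and alphaval_less_1: "alphaval r < 1"
  unfolding alphaval_def real_pval by linarith+

lemma one_minus_r_mult_pval: "(1 - r) * real (pval r) = (1 - r) * alphaval r + 5*r - 2"
  using r_lt unfolding alphaval_def by (simp add: field_simps)

lemma discrepancy_wblock:
  "discrepancy r (wblock r i) = (1 - r) * (frac (2 ^ i * alphaval r) - alphaval r)"
proof (induction i)
  case 0
  then show ?case
    using alphaval_nonneg alphaval_less_1 by (simp add: frac_eq)
next
  case (Suc i)
  define b where "b = bdigit (alphaval r) (Suc i)"
  define B where "B = [0::nat, 1, 0, 1, 1] @ replicate (pval r - b) 0"
  have "b \<le> pval r"
    using bdigit_le_1 pval_ge_1 unfolding b_def by (metis le_trans)
  then have "discrepancy r B = 2 - 5*r + (1 - r) * (real (pval r) - real b)"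
    unfolding B_def by (simp add: discrepancy_def of_nat_diff algebra_simps)
  also have "\<dots> = (1 - r) * (alphaval r - real b)"
    using one_minus_r_mult_pval by (simp add: algebra_simps)
  finally have "discrepancy r B = (1 - r) * (alphaval r - real b)" .
  moreover have "wblock r (Suc i) = wblock r i @ wblock r i @ B"
    unfolding B_def b_def by simp
  ultimately have "discrepancy r (wblock r (Suc i))
      = (1 - r) * (2 * frac (2 ^ i * alphaval r) - real b - alphaval r)"
    using Suc.IH by (simp add: algebra_simps)
  then show ?case
    unfolding frac_two_power_Suc b_def .
qed

lemma abs_discrepancy_wblock_le_1: "\<bar>discrepancy r (wblock r i)\<bar> \<le> 1"
proof -
  have "\<bar>frac (2 ^ i * alphaval r) - alphaval r\<bar> \<le> 1"
    using alphaval_nonneg alphaval_less_1 frac_ge_0 frac_lt_1 by (smt (verit))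
  moreover have "\<bar>1 - r\<bar> \<le> 1"
    using r_gt r_lt by simp
  ultimately show ?thesis
    unfolding discrepancy_wblock abs_mult by (simp add: mult_le_one)
qed

lemma prefix_discrepancy_le_wblock:
  "prefix_discrepancy_le r (real i + real (pval r) + 7) (wblock r i)"
proof (induction i)
  case 0
  then show ?case
    by (simp add: prefix_discrepancy_le_def)
next
  case (Suc i)
  define W where "W = wblock r i"
  define B where "B = [0::nat, 1, 0, 1, 1] @ replicate (pval r - bdigit (alphaval r) (Suc i)) 0"
  define a where "a = real i + real (pval r) + 7"
  have W: "prefix_discrepancy_le r a W" "\<bar>discrepancy r W\<bar> \<le> 1"
    using Suc.IH abs_discrepancy_wblock_le_1 unfolding W_def a_def by auto
  have "prefix_discrepancy_le r (real (length B)) B"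
    using r_gt r_lt by (intro prefix_discrepancy_le_length) auto
  moreover have "real (length B) \<le> real (pval r) + 5"
    unfolding B_def by simp
  ultimately have "prefix_discrepancy_le r a (W @ B)"
    using prefix_discrepancy_le_append[OF W] unfolding a_def by simp
  then have "prefix_discrepancy_le r (a + 1) (W @ W @ B)"
    using prefix_discrepancy_le_append[OF W] by simp
  then show ?case
    unfolding W_def B_def a_def by (simp add: algebra_simps)
qed

end

lemma two_power_le_length_wblock: "2 ^ i \<le> length (wblock r i) + 1"
  by (induction i) auto

lemma abs_zcount_sub_le_log:
  assumes "2/5 < r" and "r < 1"
    and "\<And>i k. k < length (wblock r i) \<Longrightarrow> w k = wblock r i ! k"
    and "1 \<le> n"
  shows "\<bar>real (zcount w n) - r * real n\<bar> \<le> log 2 (real n) + real (pval r) + 8"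
proof -
  define i where "i = Suc (floor_log n)"
  have "n \<le> length (wblock r i)"
    using floor_log_exp2_gt[of n] two_power_le_length_wblock[of i r] unfolding i_def by simp
  then have "\<bar>real (zcount w n) - r * real n\<bar> \<le> real i + real (pval r) + 7"
    by (rule prefix_discrepancy_le_zcount[OF prefix_discrepancy_le_wblock[OF assms(1,2)] _ assms(3)])
  moreover have "real (floor_log n) \<le> log 2 (real n)"
    using assms(4) by (simp add: floor_log_altdef)
  ultimately show ?thesis
    unfolding i_def by simp
qed

theorem lemma4p14:
  fixes r :: real and w :: "nat \<Rightarrow> nat"
  assumes "2/5 < r" and "r < 1"
    and "\<And>i k. k < length (wblock r i) \<Longrightarrow> w k = wblock r i ! k"
  shows "(\<lambda>n. real (zcount w n) / real n) \<longlonglongrightarrow> r"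
proof -
  define c where "c = real (pval r) + 8"
  have "(\<lambda>n. (log 2 (real n) + c) / real n) \<longlonglongrightarrow> 0"
    by real_asymp
  moreover have "\<forall>\<^sub>F n in sequentially.
      norm (real (zcount w n) / real n - r) \<le> norm ((log 2 (real n) + c) / real n) * 1"
    using eventually_ge_at_top[of 1]
  proof eventually_elim
    case (elim n)
    have "real (zcount w n) / real n - r = (real (zcount w n) - r * real n) / real n"
      using elim by (simp add: field_simps)
    then have "\<bar>real (zcount w n) / real n - r\<bar> = \<bar>real (zcount w n) - r * real n\<bar> / real n"
      by (simp add: abs_divide)
    also have "\<dots> \<le> (log 2 (real n) + c) / real n"
      using abs_zcount_sub_le_log[OF assms elim] unfolding c_def by (simp add: divide_right_mono)
    finally show ?case
      unfolding real_norm_def mult_1_right using abs_ge_self order_trans by blast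
  qed
  ultimately have "(\<lambda>n. real (zcount w n) / real n - r) \<longlonglongrightarrow> 0"
    by (rule tendsto_0_le)
  then show ?thesis
    by (simp add: LIM_zero_iff)
qed

end
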